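(* The commutative monoid $M$ defined below is residually finite, all its $\mathcal{J}$-classes have finitely many $\mathcal{R}$- and $\mathcal{L}$-classes, but its action on its $\mathcal{R}$-classes (equivalently, since $M$ is commutative, on its $\mathcal{L}$-classes) is not residually finite.
   Context: Let $\tau:\mathbb{Z}\setminus\{0\}\to\mathbb{Z}$, $\tau(2^k(2r+1))=\frac{2}{3}(2^{2\lceil k/2\rceil}-1)$ ($k,r\in\mathbb{Z}$, $k\ge0$). Let $M$ be the commutative monoid with zero $0$ given by generators $a,a^{-1},b_i,c_i$ ($i\in\mathbb{Z}$), $d,e$ and relations $aa^{-1}=a^{-1}a=1$; $b_ic_j=d$ if $i=j$ and $b_ic_j=a^{\tau(j-i)}e$ if $i\neq j$; and $b_ib_j=b_id=b_ie=c_jc_k=c_jd=c_je=dd=de=ee=0$ for all $i,j,k\in\mathbb{Z}$. A monoid is residually finite if distinct elements are separated by homomorphisms to finite monoids. Green's relations: $x\mathcal{R}y$ iff $xM=yM$, $x\mathcal{L}y$ iff $Mx=My$, $x\mathcal{J}y$ iff $MxM=MyM$. The action of $M$ on $M/\mathcal{R}$ ($m\cdot R_x=R_{mx}$) is residually finite if any two distinct classes are separated by an action homomorphism to an action on a finite set, equivalently for all $(s,t)\notin\mathcal{R}$ there is a finite-index (left) congruence containing $\mathcal{R}$ but not $(s,t)$. *)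

theory Defs
  imports Main "HOL-Library.Multiset"
begin

definition R_rel :: "'a::monoid_mult \<Rightarrow> 'a \<Rightarrow> bool" where
  "R_rel x y \<longleftrightarrow> range (\<lambda>m. x * m) = range (\<lambda>m. y * m)"

definition L_rel :: "'a::monoid_mult \<Rightarrow> 'a \<Rightarrow> bool" where
  "L_rel x y \<longleftrightarrow> range (\<lambda>m. m * x) = range (\<lambda>m. m * y)"

definition J_rel :: "'a::monoid_mult \<Rightarrow> 'a \<Rightarrow> bool" where
  "J_rel x y \<longleftrightarrow> {m * x * n | m n. True} = {m * y * n | m n. True}"

text \<open>Every finite monoid is isomorphic to one
  whose carrier is a finite set of natural numbers, so we take the target
  monoid to be given by a finite carrier S :: nat set, an operation f and a
  unit e.\<close>
definition finite_monoid_on :: "nat set \<Rightarrow> (nat \<Rightarrow> nat \<Rightarrow> nat) \<Rightarrow> nat \<Rightarrow> bool" where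
  "finite_monoid_on S f e \<longleftrightarrow> finite S \<and> e \<in> S \<and>
     (\<forall>a\<in>S. \<forall>b\<in>S. f a b \<in> S) \<and>
     (\<forall>a\<in>S. \<forall>b\<in>S. \<forall>c\<in>S. f (f a b) c = f a (f b c)) \<and>
     (\<forall>a\<in>S. f e a = a \<and> f a e = a)"

definition residually_finite :: "'a::monoid_mult itself \<Rightarrow> bool" where
  "residually_finite _ \<longleftrightarrow>
     (\<forall>x y :: 'a. x \<noteq> y \<longrightarrow>
        (\<exists>(S::nat set) f e (h::'a \<Rightarrow> nat).
            finite_monoid_on S f e \<and> (\<forall>m. h m \<in> S) \<and> h 1 = e \<and>
            (\<forall>m n. h (m * n) = f (h m) (h n)) \<and> h x \<noteq> h y))"

text \<open>Residual finiteness of the action of M on M/R (m . R_x = R_{mx}):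
  any two distinct R-classes are separated by an action homomorphism into an
  action of M on a finite set X (taken inside nat). A map on M/R is represented
  as a map on M that is constant on R-classes.\<close>
definition R_action_residually_finite :: "'a::monoid_mult itself \<Rightarrow> bool" where
  "R_action_residually_finite _ \<longleftrightarrow>
     (\<forall>s t :: 'a. \<not> R_rel s t \<longrightarrow>
        (\<exists>(X::nat set) (act::'a \<Rightarrow> nat \<Rightarrow> nat) (\<phi>::'a \<Rightarrow> nat).
            finite X \<and> (\<forall>m. \<forall>x\<in>X. act m x \<in> X) \<and>
            (\<forall>x\<in>X. act 1 x = x) \<and>
            (\<forall>m n. \<forall>x\<in>X. act (m * n) x = act m (act n x)) \<and>
            (\<forall>y. \<phi> y \<in> X) \<and> (\<forall>y z. R_rel y z \<longrightarrow> \<phi> y = \<phi> z) \<and>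
            (\<forall>m y. \<phi> (m * y) = act m (\<phi> y)) \<and>
            \<phi> s \<noteq> \<phi> t))"

definition R_classes_in_J :: "'a::monoid_mult \<Rightarrow> 'a set set" where
  "R_classes_in_J x = (\<lambda>y. {z. R_rel y z}) ` {y. J_rel x y}"

definition L_classes_in_J :: "'a::monoid_mult \<Rightarrow> 'a set set" where
  "L_classes_in_J x = (\<lambda>y. {z. L_rel y z}) ` {y. J_rel x y}"

datatype gen = GA | GAinv | GB int | GC int | GD | GE | GZero

definition v2 :: "int \<Rightarrow> nat" where
  "v2 n = (LEAST k. \<not> (2::int) ^ Suc k dvd n)"

text \<open>tau(2^k(2r+1)) = 2/3 (2^{2 ceil(k/2)} - 1); note ceil(k/2) = (k+1) div 2
  for k a natural number, and 3 divides 2(4^m - 1).\<close>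
definition tau :: "int \<Rightarrow> int" where
  "tau n = (2 * (2 ^ (2 * ((v2 n + 1) div 2)) - 1)) div 3"

definition apow :: "int \<Rightarrow> gen multiset" where
  "apow n = (if 0 \<le> n then replicate_mset (nat n) GA else replicate_mset (nat (- n)) GAinv)"

inductive rel0 :: "gen multiset \<Rightarrow> gen multiset \<Rightarrow> bool" where
  r_inv: "rel0 {#GA, GAinv#} {#}"
| r_bc_eq: "rel0 {#GB i, GC i#} {#GD#}"
| r_bc_neq: "i \<noteq> j \<Longrightarrow> rel0 {#GB i, GC j#} (apow (tau (j - i)) + {#GE#})"
| r_bb: "rel0 {#GB i, GB j#} {#GZero#}"
| r_bd: "rel0 {#GB i, GD#} {#GZero#}"
| r_be: "rel0 {#GB i, GE#} {#GZero#}"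
| r_cc: "rel0 {#GC j, GC k#} {#GZero#}"
| r_cd: "rel0 {#GC j, GD#} {#GZero#}"
| r_ce: "rel0 {#GC j, GE#} {#GZero#}"
| r_dd: "rel0 {#GD, GD#} {#GZero#}"
| r_de: "rel0 {#GD, GE#} {#GZero#}"
| r_ee: "rel0 {#GE, GE#} {#GZero#}"
| r_zero: "rel0 {#GZero, g#} {#GZero#}"

inductive mcong :: "gen multiset \<Rightarrow> gen multiset \<Rightarrow> bool" where
  mc_base: "rel0 u v \<Longrightarrow> mcong u v"
| mc_refl: "mcong u u"
| mc_sym: "mcong u v \<Longrightarrow> mcong v u"
| mc_trans: "mcong u v \<Longrightarrow> mcong v w \<Longrightarrow> mcong u w"
| mc_add: "mcong u v \<Longrightarrow> mcong (u + w) (v + w)"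

lemma mcong_equivp: "equivp mcong"
  by (intro equivpI reflpI sympI transpI) (auto intro: mcong.intros)

quotient_type M = "gen multiset" / mcong
  by (rule mcong_equivp)

lemma mcong_add2: "mcong u v \<Longrightarrow> mcong u' v' \<Longrightarrow> mcong (u + u') (v + v')"
proof -
  assume a: "mcong u v" and b: "mcong u' v'"
  have "mcong (u + u') (v + u')" using a by (rule mc_add)
  moreover have "mcong (u' + v) (v' + v)" using b by (rule mc_add)
  hence "mcong (v + u') (v + v')" by (simp add: add.commute)
  ultimately show ?thesis by (rule mc_trans)
qed

instantiation M :: comm_monoid_mult
begin
lift_definition one_M :: M is "{#}" .
lift_definition times_M :: "M \<Rightarrow> M \<Rightarrow> M" is "(+)"
  by (rule mcong_add2)
instance
  by standard (transfer, simp add: add.assoc add.commute add.left_commute mc_refl)+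
end

end

theory Submission
  imports Defs
begin

text \<open>
  Every element of M has a unique normal form a^n, b_i a^n, c_i a^n, d a^n,
  e a^n or 0.  For each K the relations remain consistent after reducing exponents and
  indices modulo N = 2^K and identifying d with e a^{tau N}: this rests on the 2-adic
  continuity of tau (congruent arguments modulo 2^K have congruent values).  These finite
  quotients separate any two normal forms once 2^K is large, so M is residually finite.
  Since M is commutative, J = L = R and every J-class consists of a single R-class.
  Finally b_i c_i = d while b_i c_j = a^t e is R-equivalent to e for i \<noteq> j; an action on a
  finite set must identify two of the infinitely many c_i, and then it identifies the
  R-classes of d and e, which are distinct.
\<close>

section \<open>Green's relations and residual finiteness: general facts\<close>

lemma R_rel_unit_mult:
  fixes u v y :: "'a::comm_monoid_mult"
  assumes "u * v = 1"
  shows "R_rel (u * y) y"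
  unfolding R_rel_def
proof (intro set_eqI iffI)
  fix z assume "z \<in> range (\<lambda>m. u * y * m)"
  then obtain m where "z = u * y * m" by blast
  then have "z = y * (u * m)" by (simp add: ac_simps)
  then show "z \<in> range (\<lambda>m. y * m)" by blast
next
  fix z assume "z \<in> range (\<lambda>m. y * m)"
  then obtain m where "z = y * m" by blast
  then have "z = u * y * (v * m)" using assms by (metis mult.assoc mult.left_commute mult_1_left)
  then show "z \<in> range (\<lambda>m. u * y * m)" by blast
qed

text \<open>In a commutative monoid two-sided ideals are right ideals, so Green's J, L and R coincide.\<close>
lemma J_rel_eq_R_rel: "J_rel x y = R_rel x (y::'a::comm_monoid_mult)"
proof -
  have "{m * z * n | m n. True} = range (\<lambda>m. z * m)" for z :: 'a
  proof -
    have "m * z * n = z * (m * n)" for m n by (simp add: ac_simps)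
    moreover have "z * m = 1 * z * m" for m by simp
    ultimately show ?thesis by blast
  qed
  then show ?thesis unfolding J_rel_def R_rel_def by simp
qed

lemma L_rel_eq_R_rel: "L_rel x y = R_rel x (y::'a::comm_monoid_mult)"
  unfolding L_rel_def R_rel_def by (simp add: mult.commute)

lemma R_classes_in_J_comm: "R_classes_in_J x = {{z. R_rel x (z::'a::comm_monoid_mult)}}"
  unfolding R_classes_in_J_def J_rel_eq_R_rel R_rel_def by auto

lemma L_classes_in_J_comm: "L_classes_in_J x = {{z. R_rel x (z::'a::comm_monoid_mult)}}"
  unfolding L_classes_in_J_def J_rel_eq_R_rel L_rel_eq_R_rel R_rel_def by auto

lemma finite_image_hom_to_nat_monoid:
  fixes h :: "'a::monoid_mult \<Rightarrow> 'b" and op :: "'b \<Rightarrow> 'b \<Rightarrow> 'b"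
  assumes fin: "finite (range h)" and hom: "\<And>m n. h (m * n) = op (h m) (h n)"
  shows "\<exists>(S::nat set) f (g::'a \<Rightarrow> nat). finite_monoid_on S f (g 1) \<and> (\<forall>m. g m \<in> S) \<and>
            (\<forall>m n. g (m * n) = f (g m) (g n)) \<and> (\<forall>x y. h x \<noteq> h y \<longrightarrow> g x \<noteq> g y)"
proof -
  obtain enc :: "'b \<Rightarrow> nat" where inj: "inj_on enc (range h)"
    using finite_imp_inj_to_nat_seg[OF fin] by blast
  define dec where "dec = inv_into (range h) enc"
  have dec_enc [simp]: "dec (enc (h m)) = h m" for m
    unfolding dec_def by (rule inv_into_f_f[OF inj]) simp
  define S where "S = enc ` range h"
  define f where "f a b = enc (op (dec a) (dec b))" for a b
  define g where "g m = enc (h m)" for m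
  have g_mult: "g (m * n) = f (g m) (g n)" for m n
    unfolding g_def f_def by (simp add: hom)
  have S_eq: "S = range g" unfolding S_def g_def by auto
  have "finite S" unfolding S_def using fin by simp
  then have "finite_monoid_on S f (g 1)"
    unfolding finite_monoid_on_def S_eq by (auto simp: g_mult[symmetric] mult.assoc)
  moreover have "g x \<noteq> g y" if "h x \<noteq> h y" for x y
    unfolding g_def using that inj by (auto dest: inj_onD)
  ultimately show ?thesis using g_mult S_eq by blast
qed

lemma residually_finite_if_separating_homs:
  fixes hom :: "'i \<Rightarrow> 'a::monoid_mult \<Rightarrow> 'b" and op :: "'i \<Rightarrow> 'b \<Rightarrow> 'b \<Rightarrow> 'b"
  assumes fin: "\<And>i. finite (range (hom i))"
    and mult: "\<And>i m n. hom i (m * n) = op i (hom i m) (hom i n)"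
    and sep: "\<And>x y. x \<noteq> y \<Longrightarrow> \<exists>i. hom i x \<noteq> hom i y"
  shows "residually_finite TYPE('a)"
  unfolding residually_finite_def
proof (intro allI impI)
  fix x y :: 'a
  assume "x \<noteq> y"
  then obtain i where sep_i: "hom i x \<noteq> hom i y" using sep by blast
  obtain S f and g :: "'a \<Rightarrow> nat" where
    "finite_monoid_on S f (g 1)" "\<forall>m. g m \<in> S" "\<forall>m n. g (m * n) = f (g m) (g n)"
    and "\<forall>x y. hom i x \<noteq> hom i y \<longrightarrow> g x \<noteq> g y"
    using finite_image_hom_to_nat_monoid[of "hom i" "op i", OF fin mult] by blast
  with sep_i show "\<exists>(S::nat set) f e (h::'a \<Rightarrow> nat). finite_monoid_on S f e \<and> (\<forall>m. h m \<in> S) \<and>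
          h 1 = e \<and> (\<forall>m n. h (m * n) = f (h m) (h n)) \<and> h x \<noteq> h y"
    by (intro exI[of _ S] exI[of _ f] exI[of _ "g 1"] exI[of _ g]) simp
qed

text \<open>Obstruction to residual finiteness of the action on R-classes: if infinitely many c_i
  satisfy b_i c_i = d while b_i c_j lies in the R-class of e for i \<noteq> j, then an action on a finite
  set identifies two c_i's and therefore the R-classes of d and e.\<close>
lemma not_R_action_residually_finite_if:
  fixes b c :: "nat \<Rightarrow> 'a::monoid_mult" and d e :: 'a
  assumes diag: "\<And>i. b i * c i = d"
    and off_diag: "\<And>i j. i \<noteq> j \<Longrightarrow> R_rel (b i * c j) e"
    and not_R: "\<not> R_rel d e"
  shows "\<not> R_action_residually_finite TYPE('a)"
proof
  assume "R_action_residually_finite TYPE('a)"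
  note witness = this[unfolded R_action_residually_finite_def, rule_format, OF not_R]
  obtain X and act :: "'a \<Rightarrow> nat \<Rightarrow> nat" and \<phi> :: "'a \<Rightarrow> nat" where
    fin: "finite X" and into: "\<forall>y. \<phi> y \<in> X" and invariant: "\<forall>y z. R_rel y z \<longrightarrow> \<phi> y = \<phi> z"
    and equivariant: "\<forall>m y. \<phi> (m * y) = act m (\<phi> y)" and sep: "\<phi> d \<noteq> \<phi> e"
    using witness by blast
  have "\<not> inj (\<phi> \<circ> c)"
  proof
    assume "inj (\<phi> \<circ> c)"
    moreover have "range (\<phi> \<circ> c) \<subseteq> X" using into by auto
    ultimately show False using finite_imageD[of "\<phi> \<circ> c" UNIV] finite_subset[OF _ fin] by auto
  qed
  then obtain i j where "i \<noteq> j" and collide: "\<phi> (c i) = \<phi> (c j)" unfolding inj_def by auto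
  have "\<phi> d = act (b i) (\<phi> (c i))" using equivariant diag[of i] by metis
  also have "\<dots> = \<phi> (b i * c j)" using equivariant collide by metis
  also have "\<dots> = \<phi> e" using invariant off_diag[OF \<open>i \<noteq> j\<close>] by blast
  finally show False using sep by contradiction
qed

section \<open>The 2-adic behaviour of tau\<close>

lemma int_less_pow2: "int k < 2 ^ k"
  by (metis less_exp of_nat_less_iff of_nat_numeral of_nat_power)

lemma pow2_dvd_iff_le_v2:
  fixes n :: int
  assumes "n \<noteq> 0"
  shows "2 ^ k dvd n \<longleftrightarrow> k \<le> v2 n"
proof -
  have bounded: "\<not> (2::int) ^ Suc (nat \<bar>n\<bar>) dvd n"
  proof
    assume "(2::int) ^ Suc (nat \<bar>n\<bar>) dvd n"
    then have "\<bar>(2::int) ^ Suc (nat \<bar>n\<bar>)\<bar> \<le> \<bar>n\<bar>"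
      by (rule dvd_imp_le_int[OF assms])
    moreover have "int (nat \<bar>n\<bar>) < 2 ^ nat \<bar>n\<bar>" by (rule int_less_pow2)
    ultimately show False by simp
  qed
  have not_dvd: "\<not> 2 ^ Suc (v2 n) dvd n"
    unfolding v2_def by (rule LeastI[of _ "nat \<bar>n\<bar>"]) (rule bounded)
  have dvd: "2 ^ k dvd n" if "k \<le> v2 n" for k
  proof (cases "v2 n")
    case 0 with that show ?thesis by simp
  next
    case (Suc l)
    then have "l < v2 n" by simp
    then have "\<not> \<not> (2::int) ^ Suc l dvd n"
      unfolding v2_def by (rule not_less_Least)
    then have "2 ^ v2 n dvd n" using Suc by simp
    then show ?thesis using that by (meson dvd_trans le_imp_power_dvd)
  qed
  show ?thesis
  proof
    assume "2 ^ k dvd n"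
    show "k \<le> v2 n"
    proof (rule ccontr)
      assume "\<not> k \<le> v2 n"
      then have "(2::int) ^ Suc (v2 n) dvd 2 ^ k" by (intro le_imp_power_dvd) simp
      with \<open>2 ^ k dvd n\<close> not_dvd show False using dvd_trans by blast
    qed
  qed (rule dvd)
qed

lemma v2_pow2: "v2 (2 ^ K) = K"
proof -
  have "k \<le> v2 (2 ^ K) \<longleftrightarrow> k \<le> K" for k
    using pow2_dvd_iff_le_v2[of "2 ^ K" k] by (simp add: dvd_power_iff)
  then show ?thesis by (meson le_antisym order_refl)
qed

lemma v2_min_cong:
  fixes z z' :: int
  assumes "z \<noteq> 0" "z' \<noteq> 0" "2 ^ K dvd z - z'"
  shows "min (v2 z) K = min (v2 z') K"
proof -
  have "k \<le> v2 z \<longleftrightarrow> k \<le> v2 z'" if "k \<le> K" for k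
  proof -
    have "(2::int) ^ k dvd z - z'"
      using that assms(3) by (meson dvd_trans le_imp_power_dvd)
    then have "2 ^ k dvd z \<longleftrightarrow> 2 ^ k dvd z'"
      by (metis dvd_diff_right_iff dvd_diff_commute)
    then show ?thesis using assms(1,2) by (simp add: pow2_dvd_iff_le_v2)
  qed
  then show ?thesis by (metis min.absorb_iff2 nle_le)
qed

lemma three_tau: "3 * tau n = 2 * 4 ^ ((v2 n + 1) div 2) - 2"
proof -
  define m where "m = (v2 n + 1) div 2"
  have "(4::int) ^ m mod 3 = 1" by (simp add: power_mod[of 4 3 m, symmetric])
  then have "3 dvd 2 * ((4::int) ^ m - 1)" by (metis dvd_minus_mod dvd_mult)
  moreover have "tau n = 2 * (4 ^ m - 1) div 3"
    unfolding tau_def m_def by (simp add: power_mult)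
  ultimately show ?thesis unfolding m_def[symmetric] by simp
qed

lemma pow2_dvd_four_pow: "K \<le> k \<Longrightarrow> (2::int) ^ K dvd 4 ^ ((k + 1) div 2)"
proof -
  assume "K \<le> k"
  then have "(2::int) ^ K dvd 2 ^ (2 * ((k + 1) div 2))" by (intro le_imp_power_dvd) linarith
  then show ?thesis by (simp add: power_mult)
qed

text \<open>Key property of tau: it is 2-adically continuous, i.e. congruences modulo 2^K are preserved.
  This is what makes the finite quotients below well defined.\<close>
lemma tau_cong:
  fixes z z' :: int
  assumes "z \<noteq> 0" "z' \<noteq> 0" "2 ^ K dvd z - z'"
  shows "2 ^ K dvd tau z - tau z'"
proof (cases "v2 z < K")
  case True
  then have "v2 z' = v2 z" using v2_min_cong[OF assms] by (simp add: min_def split: if_splits)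
  then show ?thesis by (simp add: tau_def)
next
  case False
  then have "K \<le> v2 z" "K \<le> v2 z'" using v2_min_cong[OF assms] by (auto simp: min_def split: if_splits)
  then have "(2::int) ^ K dvd 2 * 4 ^ ((v2 z + 1) div 2) - 2 * 4 ^ ((v2 z' + 1) div 2)"
    by (intro dvd_diff dvd_mult pow2_dvd_four_pow)
  then have "2 ^ K dvd 3 * (tau z - tau z')" unfolding right_diff_distrib three_tau by simp
  moreover have "coprime ((2::int) ^ K) 3" by simp
  ultimately show ?thesis using coprime_dvd_mult_right_iff by blast
qed

text \<open>tau(2^K) is never congruent modulo 2^K to a small integer s; this separates d from
  the elements e a^s in the finite quotients.\<close>
lemma tau_pow2_gap:
  fixes s :: int
  assumes small: "\<bar>3 * s + 2\<bar> < 2 ^ K"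
  shows "\<not> 2 ^ K dvd s - tau (2 ^ K)"
proof
  assume "2 ^ K dvd s - tau (2 ^ K)"
  then have "2 ^ K dvd 3 * s - 2 * 4 ^ ((K + 1) div 2) + 2"
    using three_tau[of "2 ^ K"] unfolding v2_pow2
    by (smt (verit, best) dvd_add_left_iff dvd_mult2 right_diff_distrib)
  moreover have "2 ^ K dvd 2 * (4::int) ^ ((K + 1) div 2)" by (intro dvd_mult pow2_dvd_four_pow) simp
  ultimately have "2 ^ K dvd 3 * s + 2" by (smt (verit, ccfv_SIG) dvd_add)
  moreover have "3 * s + 2 \<noteq> 0" by presburger
  ultimately have "2 ^ K \<le> \<bar>3 * s + 2\<bar>" by (metis abs_of_pos dvd_imp_le_int zero_less_power zero_less_numeral)
  with small show False by simp
qed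

section \<open>Normal forms in M\<close>

declare mc_trans [trans]

lemma mcong_add_left: "mcong u v \<Longrightarrow> mcong (w + u) (w + v)"
  using mc_add[of u v w] by (simp add: add.commute)

lemma mcong_rewrite: "rel0 P Q \<Longrightarrow> P \<subseteq># u \<Longrightarrow> mcong u (u - P + Q)"
  using mcong_add_left[OF mc_base, of P Q "u - P"] by (simp add: subset_mset.diff_add)

lemma mcong_zero_absorbs: "mcong (add_mset GZero w) {#GZero#}"
proof (induction w)
  case empty
  show ?case by (rule mc_refl)
next
  case (add g w)
  have "mcong (add_mset GZero (add_mset g w)) {#GZero, g#}"
    using mc_add[OF add, of "{#g#}"] by (simp add: add_mset_commute)
  then show ?case using mc_base[OF r_zero] mc_trans by blast
qed

lemma mcong_zero: "rel0 P {#GZero#} \<Longrightarrow> P \<subseteq># u \<Longrightarrow> mcong u {#GZero#}"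
  using mcong_rewrite[of P "{#GZero#}" u] mcong_zero_absorbs[of "u - P"] mc_trans by simp

lemma apow_succ_nonneg: "0 \<le> n \<Longrightarrow> apow (n + 1) = add_mset GA (apow n)"
  by (simp add: apow_def nat_add_distrib)

lemma apow_neg: "n < 0 \<Longrightarrow> apow n = add_mset GAinv (apow (n + 1))"
proof -
  assume "n < 0"
  then have "nat (- n) = Suc (nat (- (n + 1)))" by simp
  then show ?thesis using \<open>n < 0\<close> by (cases "n = -1") (simp_all add: apow_def)
qed

lemma mcong_cancel: "mcong (add_mset GA (add_mset GAinv w)) w"
  using mcong_rewrite[OF r_inv, of "add_mset GA (add_mset GAinv w)"] by simp

lemma apow_succ: "mcong (add_mset GA (apow n)) (apow (n + 1))"
proof (cases "0 \<le> n")
  case True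
  then show ?thesis by (simp add: apow_succ_nonneg mc_refl)
next
  case False
  then show ?thesis using mcong_cancel by (simp add: apow_neg)
qed

lemma apow_pred: "mcong (add_mset GAinv (apow n)) (apow (n - 1))"
proof -
  have "mcong (add_mset GAinv (apow n)) (add_mset GAinv (add_mset GA (apow (n - 1))))"
    using mcong_add_left[OF mc_sym[OF apow_succ[of "n - 1"]], of "{#GAinv#}"] by (simp add: add_mset_commute)
  moreover have "mcong (add_mset GAinv (add_mset GA (apow (n - 1)))) (apow (n - 1))"
    using mcong_cancel by (simp add: add_mset_commute)
  ultimately show ?thesis by (rule mc_trans)
qed

lemma apow_add: "mcong (apow n + apow m) (apow (n + m))"
proof (induction m rule: int_induct[where k = 0])
  case base
  show ?case by (simp add: apow_def mc_refl)
next
  case (step1 m)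
  have "mcong (apow n + apow (m + 1)) (add_mset GA (apow n + apow m))"
    using mcong_add_left[OF mc_sym[OF apow_succ[of m]], of "apow n"] by simp
  also have "mcong \<dots> (add_mset GA (apow (n + m)))"
    using mcong_add_left[OF step1(2), of "{#GA#}"] by simp
  also have "mcong \<dots> (apow (n + (m + 1)))"
    using apow_succ[of "n + m"] by (simp add: add.assoc)
  finally show ?case .
next
  case (step2 m)
  have "mcong (apow n + apow (m - 1)) (add_mset GAinv (apow n + apow m))"
    using mcong_add_left[OF mc_sym[OF apow_pred[of m]], of "apow n"] by simp
  also have "mcong \<dots> (add_mset GAinv (apow (n + m)))"
    using mcong_add_left[OF step2(2), of "{#GAinv#}"] by simp
  also have "mcong \<dots> (apow (n + (m - 1)))"
    using apow_pred[of "n + m"] by (simp add: algebra_simps)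
  finally show ?case .
qed

datatype nf = NU int | NB int int | NC int int | ND int | NE int | NZ

fun nf_word :: "nf \<Rightarrow> gen multiset" where
  "nf_word (NU n) = apow n"
| "nf_word (NB i n) = add_mset (GB i) (apow n)"
| "nf_word (NC i n) = add_mset (GC i) (apow n)"
| "nf_word (ND n) = add_mset GD (apow n)"
| "nf_word (NE n) = add_mset GE (apow n)"
| "nf_word NZ = {#GZero#}"

fun gen_times :: "gen \<Rightarrow> nf \<Rightarrow> nf" where
  "gen_times GA (NU n) = NU (n + 1)"
| "gen_times GA (NB i n) = NB i (n + 1)"
| "gen_times GA (NC i n) = NC i (n + 1)"
| "gen_times GA (ND n) = ND (n + 1)"
| "gen_times GA (NE n) = NE (n + 1)"
| "gen_times GAinv (NU n) = NU (n - 1)"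
| "gen_times GAinv (NB i n) = NB i (n - 1)"
| "gen_times GAinv (NC i n) = NC i (n - 1)"
| "gen_times GAinv (ND n) = ND (n - 1)"
| "gen_times GAinv (NE n) = NE (n - 1)"
| "gen_times (GB i) (NU n) = NB i n"
| "gen_times (GB i) (NC j n) = (if i = j then ND n else NE (n + tau (j - i)))"
| "gen_times (GC j) (NU n) = NC j n"
| "gen_times (GC j) (NB i n) = (if i = j then ND n else NE (n + tau (j - i)))"
| "gen_times GD (NU n) = ND n"
| "gen_times GE (NU n) = NE n"
| "gen_times _ _ = NZ"

lemma mcong_shift_succ: "mcong (add_mset GA (add_mset g (apow n))) (add_mset g (apow (n + 1)))"
  using mcong_add_left[OF apow_succ[of n], of "{#g#}"] by (simp add: add_mset_commute)

lemma mcong_shift_pred: "mcong (add_mset GAinv (add_mset g (apow n))) (add_mset g (apow (n - 1)))"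
  using mcong_add_left[OF apow_pred[of n], of "{#g#}"] by (simp add: add_mset_commute)

lemma mcong_bc_eq: "mcong (add_mset (GB i) (add_mset (GC i) (apow n))) (add_mset GD (apow n))"
  using mcong_rewrite[OF r_bc_eq[of i], of "add_mset (GB i) (add_mset (GC i) (apow n))"] by simp

lemma mcong_bc_neq:
  assumes "i \<noteq> j"
  shows "mcong (add_mset (GB i) (add_mset (GC j) (apow n))) (add_mset GE (apow (n + tau (j - i))))"
proof -
  have "mcong (add_mset (GB i) (add_mset (GC j) (apow n))) (add_mset GE (apow n + apow (tau (j - i))))"
    using mcong_rewrite[OF r_bc_neq[OF assms], of "add_mset (GB i) (add_mset (GC j) (apow n))"]
    by (simp add: ac_simps)
  also have "mcong \<dots> (add_mset GE (apow (n + tau (j - i))))"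
    using mcong_add_left[OF apow_add, of "{#GE#}"] by simp
  finally show ?thesis .
qed

lemma mcong_bb: "mcong (add_mset (GB i) (add_mset (GB j) w)) {#GZero#}"
  by (rule mcong_zero[OF r_bb[of i j]]) simp

lemma mcong_cc: "mcong (add_mset (GC i) (add_mset (GC j) w)) {#GZero#}"
  by (rule mcong_zero[OF r_cc[of i j]]) simp

lemma nf_word_gen_times: "mcong (add_mset g (nf_word x)) (nf_word (gen_times g x))"
  by (cases g; cases x)
    (auto simp: mcong_shift_succ mcong_shift_pred apow_succ apow_pred mcong_bc_eq mcong_bc_neq
          mcong_zero_absorbs mcong_bb mcong_cc mc_refl add_mset_commute intro: mcong_zero rel0.intros)

lemma nf_word_exists: "\<exists>x. mcong u (nf_word x)"
proof (induction u)
  case empty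
  have "nf_word (NU 0) = {#}" by (simp add: apow_def)
  then show ?case by (metis mc_refl)
next
  case (add g u)
  then obtain x where "mcong u (nf_word x)" by blast
  then have "mcong (add_mset g u) (add_mset g (nf_word x))"
    using mcong_add_left[of u "nf_word x" "{#g#}"] by simp
  then show ?case using nf_word_gen_times mc_trans by blast
qed

lemma M_normal_form: "\<exists>x. m = abs_M (nf_word x)"
proof (induction m rule: M.abs_induct)
  case (1 u)
  show ?case using nf_word_exists M.abs_eq_iff by blast
qed

section \<open>Finite quotients of M\<close>

text \<open>The finite quotients M_N of M (used for N = 2^K), obtained by imposing a^N = 1,
  b_{i+N} = b_i, c_{i+N} = c_i and d = e a^{tau N}.  Their elements are a^g (QU g), b_x a^g (QB x g),
  c_x a^g (QC x g), e a^g (QE g) and 0 (QZ), with x and g residues modulo N.\<close>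
datatype quot = QU int | QB int int | QC int int | QE int | QZ

text \<open>The exponent of a produced by b_x c_y in M_N, depending only on y - x modulo N.\<close>
definition tau_mod :: "int \<Rightarrow> int \<Rightarrow> int" where
  "tau_mod N z = tau (if z mod N = 0 then N else z mod N)"

fun qmult :: "int \<Rightarrow> quot \<Rightarrow> quot \<Rightarrow> quot" where
  "qmult N (QU g) (QU h) = QU ((g + h) mod N)"
| "qmult N (QU g) (QB x h) = QB x ((g + h) mod N)"
| "qmult N (QU g) (QC x h) = QC x ((g + h) mod N)"
| "qmult N (QU g) (QE h) = QE ((g + h) mod N)"
| "qmult N (QB x h) (QU g) = QB x ((g + h) mod N)"
| "qmult N (QC x h) (QU g) = QC x ((g + h) mod N)"
| "qmult N (QE h) (QU g) = QE ((g + h) mod N)"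
| "qmult N (QB x g) (QC y h) = QE ((g + h + tau_mod N (y - x)) mod N)"
| "qmult N (QC y h) (QB x g) = QE ((g + h + tau_mod N (y - x)) mod N)"
| "qmult N _ _ = QZ"

lemma qmult_comm: "qmult N s t = qmult N t s"
  by (cases s; cases t) (simp_all add: ac_simps)

text \<open>M_N is a commutative monoid; associativity only needs reduction modulo N inside sums.\<close>
lemma mod_add_inner:
  "(a + (b mod N + c)) mod N = (a + (b + c)) mod N"
  "(a + (b + c mod N)) mod N = (a + (b + c)) mod N" for a b c N :: int
  by (metis add.left_commute mod_add_left_eq, metis add.assoc mod_add_right_eq)

lemma qmult_assoc: "qmult N (qmult N s t) u = qmult N s (qmult N t u)"
  by (cases s; cases t; cases u) (simp_all add: mod_simps ac_simps mod_add_inner)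

definition reduced :: "int \<Rightarrow> quot \<Rightarrow> bool" where
  "reduced N t = (case t of
       QU g \<Rightarrow> g \<in> {0..<N}
     | QB x g \<Rightarrow> x \<in> {0..<N} \<and> g \<in> {0..<N}
     | QC x g \<Rightarrow> x \<in> {0..<N} \<and> g \<in> {0..<N}
     | QE g \<Rightarrow> g \<in> {0..<N}
     | QZ \<Rightarrow> True)"

lemma reduced_qmult: "0 < N \<Longrightarrow> reduced N s \<Longrightarrow> reduced N t \<Longrightarrow> reduced N (qmult N s t)"
  by (cases s; cases t) (simp_all add: reduced_def)

lemma qmult_unit: "0 < N \<Longrightarrow> reduced N t \<Longrightarrow> qmult N (QU 0) t = t"
  by (cases t) (simp_all add: reduced_def)

lemma finite_reduced: "finite {t. reduced N t}"
proof -
  let ?I = "{0..<N}"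
  have "{t. reduced N t} \<subseteq>
      QU ` ?I \<union> case_prod QB ` (?I \<times> ?I) \<union> case_prod QC ` (?I \<times> ?I) \<union> QE ` ?I \<union> {QZ}"
  proof
    fix t assume "t \<in> {t. reduced N t}"
    then show "t \<in> QU ` ?I \<union> case_prod QB ` (?I \<times> ?I) \<union> case_prod QC ` (?I \<times> ?I) \<union> QE ` ?I \<union> {QZ}"
      by (cases t) (auto simp: reduced_def image_iff)
  qed
  then show ?thesis by (rule finite_subset) auto
qed

definition gen_image :: "int \<Rightarrow> gen \<Rightarrow> quot" where
  "gen_image N g = (case g of
       GA \<Rightarrow> QU (1 mod N)
     | GAinv \<Rightarrow> QU ((- 1) mod N)
     | GB i \<Rightarrow> QB (i mod N) 0
     | GC j \<Rightarrow> QC (j mod N) 0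
     | GD \<Rightarrow> QE (tau N mod N)
     | GE \<Rightarrow> QE 0
     | GZero \<Rightarrow> QZ)"

definition qeval :: "int \<Rightarrow> gen multiset \<Rightarrow> quot" where
  "qeval N u = fold_mset (\<lambda>g t. qmult N (gen_image N g) t) (QU 0) u"

interpretation qeval_fold: comp_fun_commute "\<lambda>g t. qmult N (gen_image N g) t"
  by unfold_locales (auto simp: fun_eq_iff, metis qmult_assoc qmult_comm)

lemma qeval_empty [simp]: "qeval N {#} = QU 0"
  by (simp add: qeval_def)

lemma qeval_add_mset [simp]: "qeval N (add_mset g u) = qmult N (gen_image N g) (qeval N u)"
  unfolding qeval_def by (rule qeval_fold.fold_mset_add_mset)

lemma reduced_qeval: "0 < N \<Longrightarrow> reduced N (qeval N u)"
proof (induction u)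
  case empty
  then show ?case by (simp add: reduced_def)
next
  case (add g u)
  have "reduced N (gen_image N g)" using add.prems by (cases g) (simp_all add: reduced_def gen_image_def)
  then show ?case using add reduced_qmult by simp
qed

lemma qeval_add: "0 < N \<Longrightarrow> qeval N (u + w) = qmult N (qeval N u) (qeval N w)"
  by (induction u) (simp_all add: qmult_unit reduced_qeval qmult_assoc)

lemma qeval_apow [simp]: "qeval N (apow n) = QU (n mod N)"
proof -
  have "qeval N (replicate_mset k g) = QU (s * int k mod N)" if "gen_image N g = QU (s mod N)" for k g s
    using that by (induction k) (simp_all add: mod_simps algebra_simps)
  then show ?thesis by (simp add: apow_def gen_image_def)
qed

text \<open>For N = 2^K the quotient respects the relation b_i c_j = a^{tau(j-i)} e, thanks to tau_cong.\<close>
lemma tau_mod_pow2: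
  assumes "i \<noteq> j"
  shows "tau_mod (2 ^ K) (j mod 2 ^ K - i mod 2 ^ K) mod 2 ^ K = tau (j - i) mod 2 ^ K"
proof -
  let ?N = "(2::int) ^ K"
  define z where "z = (if (j - i) mod ?N = 0 then ?N else (j - i) mod ?N)"
  have "tau_mod ?N (j mod ?N - i mod ?N) = tau z"
    unfolding tau_mod_def z_def by (simp add: mod_diff_eq)
  moreover have "?N dvd tau z - tau (j - i)"
  proof (rule tau_cong)
    show "z \<noteq> 0" "j - i \<noteq> 0" using assms by (simp_all add: z_def)
    show "?N dvd z - (j - i)" unfolding z_def by (simp add: mod_eq_dvd_iff[symmetric])
  qed
  ultimately show ?thesis by (simp add: mod_eq_dvd_iff)
qed

lemma qeval_rel0: "rel0 u v \<Longrightarrow> qeval (2 ^ K) u = qeval (2 ^ K) v"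
proof (induction rule: rel0.induct)
  case (r_bc_neq i j)
  then show ?case
    using tau_mod_pow2[OF r_bc_neq, of K] by (simp add: gen_image_def qeval_add mod_simps)
qed (simp_all add: gen_image_def qeval_add mod_simps tau_mod_def)

lemma qeval_mcong: "mcong u v \<Longrightarrow> qeval (2 ^ K) u = qeval (2 ^ K) v"
  by (induction rule: mcong.induct) (simp_all add: qeval_rel0 qeval_add)

lift_definition quot_hom :: "nat \<Rightarrow> M \<Rightarrow> quot" is "\<lambda>K u. qeval (2 ^ K) u"
  by (rule qeval_mcong)

lemma quot_hom_mult: "quot_hom K (x * y) = qmult (2 ^ K) (quot_hom K x) (quot_hom K y)"
  by transfer (simp add: qeval_add)

lemma finite_range_quot_hom: "finite (range (quot_hom K))"
proof (rule finite_subset[OF _ finite_reduced])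
  show "range (quot_hom K) \<subseteq> {t. reduced (2 ^ K) t}"
    by clarsimp (transfer, simp add: reduced_qeval)
qed

lemma qeval_nf_word:
  "qeval N (nf_word (NU n)) = QU (n mod N)"
  "qeval N (nf_word (NB i n)) = QB (i mod N) (n mod N)"
  "qeval N (nf_word (NC i n)) = QC (i mod N) (n mod N)"
  "qeval N (nf_word (ND n)) = QE ((n + tau N) mod N)"
  "qeval N (nf_word (NE n)) = QE (n mod N)"
  "qeval N (nf_word NZ) = QZ"
  by (simp_all add: gen_image_def mod_simps)

text \<open>Size of a normal form, measuring which modulus is needed to see it faithfully.\<close>
fun nf_size :: "nf \<Rightarrow> int" where
  "nf_size (NU n) = \<bar>n\<bar>"
| "nf_size (NB i n) = \<bar>i\<bar> + \<bar>n\<bar>"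
| "nf_size (NC i n) = \<bar>i\<bar> + \<bar>n\<bar>"
| "nf_size (ND n) = \<bar>n\<bar>"
| "nf_size (NE n) = \<bar>n\<bar>"
| "nf_size NZ = 0"

lemma mod_eq_small: "\<bar>x\<bar> + \<bar>y\<bar> < N \<Longrightarrow> x mod N = y mod N \<Longrightarrow> x = y" for x y N :: int
proof (rule ccontr)
  assume small: "\<bar>x\<bar> + \<bar>y\<bar> < N" and "x mod N = y mod N" and "x \<noteq> y"
  then have "N dvd x - y" by (simp add: mod_eq_dvd_iff)
  then have "\<bar>N\<bar> \<le> \<bar>x - y\<bar>" using \<open>x \<noteq> y\<close> by (simp add: dvd_imp_le_int)
  with small show False by linarith
qed

lemma mod_shift_eq_iff: "(x + t) mod N = (y + t) mod N \<longleftrightarrow> x mod N = y mod N" for x y t N :: int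
  by (simp add: mod_eq_dvd_iff)

text \<open>Separation of normal forms: for 2^K large compared with their sizes, distinct normal forms
  have distinct images in M_{2^K}.  The only delicate pair is d a^n versus e a^m (tau_pow2_gap).\<close>
lemma qeval_nf_word_inj:
  assumes large: "3 * (nf_size a + nf_size b) + 2 < 2 ^ K"
    and eq: "qeval (2 ^ K) (nf_word a) = qeval (2 ^ K) (nf_word b)"
  shows "a = b"
proof -
  let ?N = "(2::int) ^ K"
  have small: "x mod ?N = y mod ?N \<longleftrightarrow> x = y" if "3 * (\<bar>x\<bar> + \<bar>y\<bar>) + 2 < ?N" for x y
    using mod_eq_small[of x y ?N] that by auto
  have d_ne_e: "(n + tau ?N) mod ?N \<noteq> m mod ?N" if "3 * (\<bar>n\<bar> + \<bar>m\<bar>) + 2 < ?N" for n m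
  proof -
    have "\<bar>3 * (m - n) + 2\<bar> \<le> 3 * (\<bar>n\<bar> + \<bar>m\<bar>) + 2" by simp
    then have "\<bar>3 * (m - n) + 2\<bar> < ?N" using that by (smt (verit))
    then have "\<not> ?N dvd (m - n) - tau ?N" by (rule tau_pow2_gap)
    then show ?thesis by (simp add: mod_eq_dvd_iff dvd_diff_commute diff_diff_eq)
  qed
  show ?thesis
    using eq large
    by (cases a; cases b)
      (simp_all del: nf_word.simps add: qeval_nf_word mod_shift_eq_iff small d_ne_e d_ne_e[THEN not_sym])
qed

lemma nf_word_determined_by_quotients:
  assumes "\<And>K. quot_hom K (abs_M (nf_word a)) = quot_hom K (abs_M (nf_word b))"
  shows "a = b"
proof (rule qeval_nf_word_inj)
  define K where "K = nat (3 * (nf_size a + nf_size b) + 3)"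
  have "0 \<le> nf_size x" for x by (cases x) simp_all
  then show "3 * (nf_size a + nf_size b) + 2 < 2 ^ K"
    using int_less_pow2[of K] unfolding K_def by linarith
  show "qeval (2 ^ K) (nf_word a) = qeval (2 ^ K) (nf_word b)"
    using assms[of K] by (simp add: quot_hom.abs_eq)
qed

lemma quot_hom_separates: "x \<noteq> y \<Longrightarrow> \<exists>K. quot_hom K x \<noteq> quot_hom K y"
  using M_normal_form[of x] M_normal_form[of y] nf_word_determined_by_quotients by metis

lemma residually_finite_M: "residually_finite TYPE(M)"
  using finite_range_quot_hom quot_hom_mult quot_hom_separates
  by (rule residually_finite_if_separating_homs)

section \<open>The action on R-classes\<close>

lemma abs_M_gen_times: "abs_M {#g#} * abs_M (nf_word x) = abs_M (nf_word (gen_times g x))"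
  using nf_word_gen_times[of g x] by (simp add: times_M.abs_eq M.abs_eq_iff)

lemma apow_unit: "abs_M (apow t) * abs_M (apow (- t)) = 1"
  using apow_add[of t "- t"] by (simp add: times_M.abs_eq one_M.abs_eq M.abs_eq_iff apow_def)

text \<open>d and e lie in different R-classes: e M only contains e a^n and 0.\<close>
lemma not_R_d_e: "\<not> R_rel (abs_M {#GD#}) (abs_M {#GE#})"
proof
  assume "R_rel (abs_M {#GD#}) (abs_M {#GE#})"
  then obtain m where "abs_M {#GD#} = abs_M {#GE#} * m"
    unfolding R_rel_def by (metis mult_1_right rangeE rangeI)
  moreover obtain x where "m = abs_M (nf_word x)" using M_normal_form by blast
  ultimately have "abs_M (nf_word (ND 0)) = abs_M (nf_word (gen_times GE x))"
    by (simp add: abs_M_gen_times apow_def)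
  then have "ND 0 = gen_times GE x"
    by (intro nf_word_determined_by_quotients) simp
  then show False by (cases x) simp_all
qed

lemma abs_M_rel0: "rel0 u v \<Longrightarrow> abs_M u = abs_M v"
  by (simp add: M.abs_eq_iff mc_base)

lemma abs_M_pair: "abs_M {#g#} * abs_M {#h#} = abs_M {#g, h#}"
  by (simp add: times_M.abs_eq add_mset_commute)

lemma M_R_action_not_residually_finite: "\<not> R_action_residually_finite TYPE(M)"
proof (rule not_R_action_residually_finite_if)
  fix i j :: nat
  show "abs_M {#GB (int i)#} * abs_M {#GC (int i)#} = abs_M {#GD#}"
    unfolding abs_M_pair by (rule abs_M_rel0[OF r_bc_eq])
  assume "i \<noteq> j"
  define t where "t = tau (int j - int i)"
  have "abs_M {#GB (int i)#} * abs_M {#GC (int j)#} = abs_M (apow t + {#GE#})"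
    unfolding abs_M_pair t_def using \<open>i \<noteq> j\<close> by (intro abs_M_rel0 r_bc_neq) simp
  also have "\<dots> = abs_M (apow t) * abs_M {#GE#}" by (simp only: times_M.abs_eq)
  finally show "R_rel (abs_M {#GB (int i)#} * abs_M {#GC (int j)#}) (abs_M {#GE#})"
    using R_rel_unit_mult[OF apow_unit[of t]] by simp
qed (rule not_R_d_e)

theorem mainTheorem18:
  shows "residually_finite TYPE(M)
         \<and> (\<forall>x::M. finite (R_classes_in_J x) \<and> finite (L_classes_in_J x))
         \<and> \<not> R_action_residually_finite TYPE(M)"
  using residually_finite_M M_R_action_not_residually_finite
  by (simp add: R_classes_in_J_comm L_classes_in_J_comm)

end
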